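(* The function $h_1(x)=\exp\bigl(\cot(x)\bigr)$ is completely monotonic on $(0,\pi/2]$, and the function $h_2(x)=\exp\left(\dfrac{1}{1+\tan(x)}\right)$ is completely monotonic on $(-\pi/4,\pi/4]$.
   Context: A function $f:I\to\mathbb{R}$ on an interval $I\subset\mathbb{R}$ is completely monotonic if it has derivatives of all orders and $(-1)^n f^{(n)}(x)\ge 0$ for all $n=0,1,2,\dots$ and $x\in I$. *)

theory Defs
  imports "HOL-Analysis.Analysis"
begin

definition completely_monotonic_on :: "(real \<Rightarrow> real) \<Rightarrow> real set \<Rightarrow> bool" where
  "completely_monotonic_on f I \<longleftrightarrow>
     (\<exists>D :: nat \<Rightarrow> real \<Rightarrow> real.
        (\<forall>x\<in>I. D 0 x = f x) \<and>
        (\<forall>n. \<forall>x\<in>I. (D n has_real_derivative D (Suc n) x) (at x within I)) \<and>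
        (\<forall>n. \<forall>x\<in>I. (-1) ^ n * D n x \<ge> 0))"

end

theory Submission
  imports Defs "HOL-Computational_Algebra.Polynomial"
begin

text \<open>If \<open>w \<ge> 0\<close> satisfies the autonomous equation \<open>w' = - Q(w)\<close> for a polynomial \<open>Q\<close> with
  nonnegative coefficients, then by induction the \<open>n\<close>-th derivative of \<open>exp \<circ> w\<close> is
  \<open>(-1)^n P\<^sub>n(w) exp(w)\<close>, where \<open>P\<^sub>0 = 1\<close> and \<open>P\<^sub>n\<^sub>+\<^sub>1 = Q (P\<^sub>n' + P\<^sub>n)\<close>; all \<open>P\<^sub>n\<close> again have
  nonnegative coefficients, so \<open>exp \<circ> w\<close> is completely monotonic.
  Both functions of the theorem are of this form: \<open>cot' = -(1 + cot\<^sup>2)\<close> with \<open>cot \<ge> 0\<close> on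
  \<open>(0, \<pi>/2]\<close>, and \<open>u = 1/(1 + tan x)\<close> satisfies \<open>u' = -(u\<^sup>2 + (1 - u)\<^sup>2)\<close>, which in the shifted
  variable \<open>v = u - 1/2 \<ge> 0\<close> on \<open>(-\<pi>/4, \<pi>/4]\<close> reads \<open>v' = -(1/2 + 2 v\<^sup>2)\<close>.\<close>

definition nonneg_coeffs :: "real poly \<Rightarrow> bool" where
  "nonneg_coeffs p \<longleftrightarrow> (\<forall>i. coeff p i \<ge> 0)"

lemma nonneg_coeffs_1: "nonneg_coeffs 1"
  unfolding nonneg_coeffs_def by (simp add: coeff_1)

lemma nonneg_coeffs_add: "nonneg_coeffs p \<Longrightarrow> nonneg_coeffs q \<Longrightarrow> nonneg_coeffs (p + q)"
  unfolding nonneg_coeffs_def by simp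

lemma nonneg_coeffs_mult: "nonneg_coeffs p \<Longrightarrow> nonneg_coeffs q \<Longrightarrow> nonneg_coeffs (p * q)"
  unfolding nonneg_coeffs_def coeff_mult by (auto intro!: sum_nonneg)

lemma nonneg_coeffs_pderiv: "nonneg_coeffs p \<Longrightarrow> nonneg_coeffs (pderiv p)"
  unfolding nonneg_coeffs_def coeff_pderiv by simp

lemma poly_nonneg_if_nonneg_coeffs: "nonneg_coeffs p \<Longrightarrow> x \<ge> 0 \<Longrightarrow> poly p x \<ge> 0"
  unfolding nonneg_coeffs_def poly_altdef by (auto intro!: sum_nonneg)

primrec exp_deriv_poly :: "real poly \<Rightarrow> nat \<Rightarrow> real poly" where
  "exp_deriv_poly Q 0 = 1"
| "exp_deriv_poly Q (Suc n) = Q * (pderiv (exp_deriv_poly Q n) + exp_deriv_poly Q n)"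

lemma nonneg_coeffs_exp_deriv_poly: "nonneg_coeffs Q \<Longrightarrow> nonneg_coeffs (exp_deriv_poly Q n)"
  by (induction n)
    (auto intro: nonneg_coeffs_1 nonneg_coeffs_mult nonneg_coeffs_add nonneg_coeffs_pderiv)

lemma exp_deriv_poly_has_real_derivative:
  assumes "(w has_real_derivative - poly Q (w x)) (at x within I)"
  shows "((\<lambda>x. poly (exp_deriv_poly Q n) (w x) * exp (w x)) has_real_derivative
           - (poly (exp_deriv_poly Q (Suc n)) (w x) * exp (w x))) (at x within I)"
proof -
  have "((\<lambda>x. poly (exp_deriv_poly Q n) (w x)) has_real_derivative
          poly (pderiv (exp_deriv_poly Q n)) (w x) * - poly Q (w x)) (at x within I)"
    by (rule DERIV_chain2[OF poly_DERIV assms])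
  moreover have "((\<lambda>x. exp (w x)) has_real_derivative exp (w x) * - poly Q (w x)) (at x within I)"
    by (rule DERIV_chain2[OF DERIV_exp assms])
  ultimately show ?thesis
    by (rule DERIV_cong[OF DERIV_mult]) (simp add: algebra_simps)
qed

lemma completely_monotonic_on_exp_comp:
  assumes w_deriv: "\<And>x. x \<in> I \<Longrightarrow> (w has_real_derivative - poly Q (w x)) (at x within I)"
    and w_nonneg: "\<And>x. x \<in> I \<Longrightarrow> w x \<ge> 0"
    and Q: "nonneg_coeffs Q" and "K \<ge> 0"
  shows "completely_monotonic_on (\<lambda>x. K * exp (w x)) I"
  unfolding completely_monotonic_on_def
proof (intro exI conjI ballI allI)
  define D where "D n x = (-1) ^ n * K * (poly (exp_deriv_poly Q n) (w x) * exp (w x))" for n x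
  show "D 0 x = K * exp (w x)" for x
    by (simp add: D_def)
  show "(D n has_real_derivative D (Suc n) x) (at x within I)" if "x \<in> I" for n x
    unfolding D_def using exp_deriv_poly_has_real_derivative[OF w_deriv[OF that], of n]
    by (auto intro: DERIV_cong[OF DERIV_cmult])
  show "(-1) ^ n * D n x \<ge> 0" if "x \<in> I" for n x
  proof -
    have "(-1) ^ n * D n x = K * (poly (exp_deriv_poly Q n) (w x) * exp (w x))"
      by (simp add: D_def flip: power_add mult_2 mult.assoc)
    also have "\<dots> \<ge> 0"
      using \<open>K \<ge> 0\<close> poly_nonneg_if_nonneg_coeffs[OF nonneg_coeffs_exp_deriv_poly[OF Q] w_nonneg[OF that]]
      by simp
    finally show ?thesis .
  qed
qed

lemma cot_has_real_derivative:
  "sin x \<noteq> 0 \<Longrightarrow> (cot has_real_derivative - (1 + (cot x)\<^sup>2)) (at x)"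
  using DERIV_cot[of x] sin_squared_eq[of x]
  by (simp add: cot_def field_simps power2_eq_square)

lemma inverse_one_plus_tan_has_real_derivative:
  assumes "cos x \<noteq> 0" and "1 + tan x \<noteq> 0"
  shows "((\<lambda>x. 1 / (1 + tan x) - 1/2) has_real_derivative
           - (1/2 + 2 * (1 / (1 + tan x) - 1/2)\<^sup>2)) (at x)"
proof -
  have "((\<lambda>x. 1 / (1 + tan x) - 1/2) has_real_derivative
          - inverse ((cos x)\<^sup>2) / (1 + tan x)\<^sup>2) (at x)"
    using assms by (auto intro!: derivative_eq_intros simp: power2_eq_square)
  also have "- inverse ((cos x)\<^sup>2) / (1 + tan x)\<^sup>2 = - ((1 + (tan x)\<^sup>2) / (1 + tan x)\<^sup>2)"
    using tan_sec[OF assms(1)] by (simp add: power_inverse)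
  also have "(1 + (tan x)\<^sup>2) / (1 + tan x)\<^sup>2 = 1/2 + 2 * (1 / (1 + tan x) - 1/2)\<^sup>2"
    using assms(2) by (simp add: divide_simps) (simp add: power2_eq_square algebra_simps)
  finally show ?thesis .
qed

lemma completely_monotonic_on_exp_cot:
  "completely_monotonic_on (\<lambda>x. exp (cot x)) {0<..pi/2}"
proof -
  have "completely_monotonic_on (\<lambda>x. 1 * exp (cot x)) {0<..pi/2}"
  proof (rule completely_monotonic_on_exp_comp[where Q = "[:1, 0, 1:]"])
    fix x :: real assume "x \<in> {0<..pi/2}"
    then have "sin x > 0" and "cos x \<ge> 0"
      by (auto intro: sin_gt_zero cos_ge_zero)
    then show "cot x \<ge> 0"
      by (simp add: cot_def)
    have "poly [:1, 0, 1:] y = 1 + y\<^sup>2" for y :: real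
      by (simp add: power2_eq_square)
    then show "(cot has_real_derivative - poly [:1, 0, 1:] (cot x)) (at x within {0<..pi/2})"
      using cot_has_real_derivative[of x] \<open>sin x > 0\<close>
      by (simp add: has_field_derivative_at_within)
  qed (auto simp: nonneg_coeffs_def coeff_pCons split: nat.splits)
  then show ?thesis
    by simp
qed

lemma completely_monotonic_on_exp_inverse_one_plus_tan:
  "completely_monotonic_on (\<lambda>x. exp (1 / (1 + tan x))) {-(pi/4)<..pi/4}"
proof -
  have "completely_monotonic_on (\<lambda>x. exp (1/2) * exp (1 / (1 + tan x) - 1/2)) {-(pi/4)<..pi/4}"
  proof (rule completely_monotonic_on_exp_comp[where Q = "[:1/2, 0, 2:]"])
    fix x :: real assume x: "x \<in> {-(pi/4)<..pi/4}"
    have "tan x \<le> 1"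
      using x tan_mono_le[of x "pi/4"] by (auto simp: tan_45)
    moreover have "tan x > -1"
      using x tan_monotone[of "-(pi/4)" x] by (auto simp: tan_45)
    ultimately show "1 / (1 + tan x) - 1/2 \<ge> 0"
      by (simp add: field_simps)
    have "cos x > 0"
      using x by (intro cos_gt_zero_pi) auto
    moreover have "poly [:1/2, 0, 2:] v = 1/2 + 2 * v\<^sup>2" for v :: real
      by (simp add: power2_eq_square)
    ultimately show "((\<lambda>x. 1 / (1 + tan x) - 1/2) has_real_derivative
                 - poly [:1/2, 0, 2:] (1 / (1 + tan x) - 1/2)) (at x within {-(pi/4)<..pi/4})"
      using inverse_one_plus_tan_has_real_derivative[of x] \<open>tan x > -1\<close>
      by (simp add: has_field_derivative_at_within del: poly_pCons)
  qed (auto simp: nonneg_coeffs_def coeff_pCons split: nat.splits)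
  then show ?thesis
    by (simp flip: exp_add)
qed

theorem corollary1:
  shows "completely_monotonic_on (\<lambda>x. exp (cot x)) {0<..pi/2}
       \<and> completely_monotonic_on (\<lambda>x. exp (1 / (1 + tan x))) {-(pi/4)<..pi/4}"
  using completely_monotonic_on_exp_cot completely_monotonic_on_exp_inverse_one_plus_tan ..

end
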